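(* The dense $\mathbb{Q}$-game strategy described below is a pairing strategy (i.e. the pairs of edges it uses are pairwise disjoint) and it is a winning strategy for Breaker in the dense rational number game. The dense $\mathbb{Q}$-game strategy: At the start Breaker fixes an infinite sequence $(I_j)_{j\in\mathbb{N}}$ of pairwise disjoint nonempty open intervals of $\mathbb{Q}$, an enumeration $\mathcal{Q}$ of $\mathbb{Q}$, and an enumeration $(\{p_j,q_j\})_{j\in\mathbb{N}}$ of all $2$-element subsets of $\mathbb{Q}$. For every $j$ and every $s\in I_j\setminus\{p_j,q_j\}$ that appears later in $\mathcal{Q}$ than both $p_j$ and $q_j$, Breaker pairs the edges $p_js$ and $q_js$. Whenever Maker claims one edge of such a pair, Breaker claims the other edge of that pair in his next turn (otherwise Breaker plays arbitrarily).
   Context: Let $K^{\mathbb{Q}}$ denote the complete graph with vertex set $\mathbb{Q}$. In the dense rational number game, Maker and Breaker alternately claim previously unclaimed edges of $K^{\mathbb{Q}}$, one per turn, Maker first, for countably many turns. Maker wins if at the end the graph of Maker's edges contains a complete graph on a countably infinite vertex set $V\subseteq\mathbb{Q}$ that is dense in $\mathbb{Q}$; otherwise Breaker wins. A winning strategy for Breaker is one guaranteeing Breaker wins against every play of Maker. *)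

theory Defs
  imports Complex_Main "HOL-Library.Extended_Real"
begin

definition is_edge :: "rat set \<Rightarrow> bool" where
  "is_edge e \<longleftrightarrow> card e = 2"

definition rat_open_interval :: "rat set \<Rightarrow> bool" where
  "rat_open_interval I \<longleftrightarrow> I \<noteq> {} \<and>
     (\<exists>a b :: ereal. I = {x. a < ereal (real_of_rat x) \<and> ereal (real_of_rat x) < b})"

definition dense_in_rat :: "rat set \<Rightarrow> bool" where
  "dense_in_rat V \<longleftrightarrow> (\<forall>a b. a < b \<longrightarrow> (\<exists>v\<in>V. a < v \<and> v < b))"

text \<open>Position in the enumeration Q of s is inv Q s.\<close>
definition dense_Q_pairs ::
  "(nat \<Rightarrow> rat set) \<Rightarrow> (nat \<Rightarrow> rat) \<Rightarrow> (nat \<Rightarrow> rat set) \<Rightarrow> rat set set set" where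
  "dense_Q_pairs I Q pe =
     {{{p, s}, {q, s}} | j p q s. pe j = {p, q} \<and> p \<noteq> q \<and> s \<in> I j \<and> s \<notin> {p, q}
        \<and> inv Q p < inv Q s \<and> inv Q q < inv Q s}"

definition is_pairing :: "rat set set set \<Rightarrow> bool" where
  "is_pairing Ps \<longleftrightarrow> (\<forall>P\<in>Ps. card P = 2 \<and> (\<forall>e\<in>P. is_edge e)) \<and>
     (\<forall>P1\<in>Ps. \<forall>P2\<in>Ps. P1 \<noteq> P2 \<longrightarrow> P1 \<inter> P2 = {})"

text \<open>A legal history: a finite list of pairwise distinct edges (moves so far;
  Maker's moves at even positions, Breaker's at odd positions).\<close>
definition legal_history :: "rat set list \<Rightarrow> bool" where
  "legal_history h \<longleftrightarrow> distinct h \<and> (\<forall>e\<in>set h. is_edge e)"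

definition legal_breaker_strategy :: "(rat set list \<Rightarrow> rat set) \<Rightarrow> bool" where
  "legal_breaker_strategy \<sigma> \<longleftrightarrow>
     (\<forall>h. legal_history h \<and> odd (length h) \<longrightarrow> is_edge (\<sigma> h) \<and> \<sigma> h \<notin> set h)"

definition play_consistent :: "(rat set list \<Rightarrow> rat set) \<Rightarrow> (nat \<Rightarrow> rat set) \<Rightarrow> bool" where
  "play_consistent \<sigma> m \<longleftrightarrow>
     (\<forall>k. is_edge (m (2*k)) \<and> m (2*k) \<notin> m ` {..<2*k}) \<and>
     (\<forall>k. m (2*k+1) = \<sigma> (map m [0..<2*k+1]))"

definition maker_wins_dense :: "(nat \<Rightarrow> rat set) \<Rightarrow> bool" where
  "maker_wins_dense m \<longleftrightarrow>
     (\<exists>V. infinite V \<and> dense_in_rat V \<and>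
        (\<forall>u\<in>V. \<forall>v\<in>V. u \<noteq> v \<longrightarrow> {u, v} \<in> m ` {n. even n}))"

definition breaker_winning :: "(rat set list \<Rightarrow> rat set) \<Rightarrow> bool" where
  "breaker_winning \<sigma> \<longleftrightarrow> legal_breaker_strategy \<sigma> \<and>
     (\<forall>m. play_consistent \<sigma> m \<longrightarrow> \<not> maker_wins_dense m)"

definition follows_pairing :: "rat set set set \<Rightarrow> (rat set list \<Rightarrow> rat set) \<Rightarrow> bool" where
  "follows_pairing Ps \<sigma> \<longleftrightarrow>
     (\<forall>h. legal_history h \<and> odd (length h) \<longrightarrow>
        (\<forall>P\<in>Ps. \<forall>f. last h \<in> P \<and> f \<in> P \<and> f \<noteq> last h \<and> f \<notin> set h \<longrightarrow> \<sigma> h = f))"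

end

theory Submission imports Defs begin

text \<open>An edge \<open>{a, s}\<close> of a pair determines its apex \<open>s\<close> as the endpoint appearing later in
  the enumeration \<open>Q\<close>; the apex determines \<open>j\<close> because the intervals are disjoint, and \<open>j\<close>
  determines the pair. Hence the pairs are disjoint, and Breaker can answer every Maker move in
  a pair with the other edge of that pair, so Maker never owns both edges of a pair. If Maker
  owned a complete graph on a dense set \<open>V\<close>, take distinct \<open>p, q \<in> V\<close> and \<open>j\<close> with
  \<open>{p_j, q_j} = {p, q}\<close>: the dense set \<open>V\<close> meets the open interval \<open>I_j\<close> in infinitely many
  points, so some \<open>s \<in> V \<inter> I_j\<close> appears later in \<open>Q\<close> than \<open>p\<close> and \<open>q\<close>, and Maker owns both
  edges \<open>ps\<close> and \<open>qs\<close> of a pair.\<close>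

lemma doubleton_eq_imp_greater_eq:
  fixes f :: "'a \<Rightarrow> 'b::linorder"
  assumes "{a, s} = {b, t}" "f a < f s" "f b < f t"
  shows "s = t"
  using assms by (auto simp: doubleton_eq_iff)

lemma dense_Q_pairs_memE:
  assumes "P \<in> dense_Q_pairs I Q pe"
  obtains j s where "P = (\<lambda>x. {x, s}) ` pe j" "s \<in> I j" "\<And>x. x \<in> pe j \<Longrightarrow> inv Q x < inv Q s"
proof -
  obtain j p q s where "P = {{p, s}, {q, s}}" "pe j = {p, q}" "s \<in> I j"
      "inv Q p < inv Q s" "inv Q q < inv Q s"
    using assms unfolding dense_Q_pairs_def by blast
  then show ?thesis
    using that[of s j] by auto
qed

lemma dense_Q_pairs_is_pairing:
  assumes disjoint: "\<And>i j. i \<noteq> j \<Longrightarrow> I i \<inter> I j = {}"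
  shows "is_pairing (dense_Q_pairs I Q pe)"
  unfolding is_pairing_def
proof (intro conjI ballI impI)
  fix P assume "P \<in> dense_Q_pairs I Q pe"
  then obtain p q s where "P = {{p, s}, {q, s}}" "p \<noteq> q" "s \<notin> {p, q}"
    unfolding dense_Q_pairs_def by blast
  then show "card P = 2"
    by (auto simp: doubleton_eq_iff)
  show "\<And>e. e \<in> P \<Longrightarrow> is_edge e"
    using \<open>P = {{p, s}, {q, s}}\<close> \<open>s \<notin> {p, q}\<close> by (auto simp: is_edge_def)
next
  fix P1 P2 assume "P1 \<in> dense_Q_pairs I Q pe" "P2 \<in> dense_Q_pairs I Q pe" "P1 \<noteq> P2"
  obtain j1 s1 where P1: "P1 = (\<lambda>x. {x, s1}) ` pe j1" "s1 \<in> I j1"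
      "\<And>x. x \<in> pe j1 \<Longrightarrow> inv Q x < inv Q s1"
    using \<open>P1 \<in> dense_Q_pairs I Q pe\<close> by (elim dense_Q_pairs_memE) blast
  obtain j2 s2 where P2: "P2 = (\<lambda>x. {x, s2}) ` pe j2" "s2 \<in> I j2"
      "\<And>x. x \<in> pe j2 \<Longrightarrow> inv Q x < inv Q s2"
    using \<open>P2 \<in> dense_Q_pairs I Q pe\<close> by (elim dense_Q_pairs_memE) blast
  show "P1 \<inter> P2 = {}"
  proof (rule ccontr)
    assume "P1 \<inter> P2 \<noteq> {}"
    then obtain a b where "a \<in> pe j1" "b \<in> pe j2" "{a, s1} = {b, s2}"
      using P1(1) P2(1) by blast
    then have "s1 = s2"
      using P1(3) P2(3) by (blast intro: doubleton_eq_imp_greater_eq)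
    then have "j1 = j2"
      using P1(2) P2(2) disjoint by blast
    then have "P1 = P2"
      using P1(1) P2(1) \<open>s1 = s2\<close> by simp
    with \<open>P1 \<noteq> P2\<close> show False ..
  qed
qed

lemma exists_unclaimed_edge: "\<exists>e. is_edge e \<and> e \<notin> set h"
proof -
  let ?e = "\<lambda>n::nat. {0::rat, of_nat n + 1}"
  have "inj ?e"
    by (auto simp: inj_def doubleton_eq_iff)
  then have "infinite (range ?e - set h)"
    by (simp add: range_inj_infinite)
  then obtain n where "?e n \<notin> set h"
    using infinite_imp_nonempty by blast
  moreover have "is_edge (?e n)"
    unfolding is_edge_def by (simp add: add_nonneg_pos)
  ultimately show ?thesis by blast
qed

lemma is_pairing_partner_unique:
  assumes "is_pairing Ps" "P \<in> Ps" "P' \<in> Ps" "e \<in> P" "e \<in> P'" "f \<in> P" "f' \<in> P'"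
    "f \<noteq> e" "f' \<noteq> e"
  shows "f = f'"
proof -
  have "P = P'" "card P = 2"
    using assms unfolding is_pairing_def by blast+
  then show ?thesis
    using assms by (auto simp: card_2_iff)
qed

lemma pairing_strategy_exists:
  assumes pairing: "is_pairing Ps"
  shows "\<exists>\<sigma>. legal_breaker_strategy \<sigma> \<and> follows_pairing Ps \<sigma>"
proof -
  define answer where
    "answer h f \<longleftrightarrow> (\<exists>P\<in>Ps. last h \<in> P \<and> f \<in> P \<and> f \<noteq> last h \<and> f \<notin> set h)" for h f
  define \<sigma> where
    "\<sigma> h = (if \<exists>f. answer h f then SOME f. answer h f else SOME e. is_edge e \<and> e \<notin> set h)" for h
  have answer_\<sigma>: "answer h (\<sigma> h)" if "answer h f" for h f
    using that unfolding \<sigma>_def by (auto intro: someI)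
  have "legal_breaker_strategy \<sigma>"
    unfolding legal_breaker_strategy_def
  proof (intro allI impI)
    fix h
    show "is_edge (\<sigma> h) \<and> \<sigma> h \<notin> set h"
    proof (cases "\<exists>f. answer h f")
      case True
      then have "answer h (\<sigma> h)" using answer_\<sigma> by blast
      then show ?thesis using pairing unfolding answer_def is_pairing_def by blast
    next
      case False
      then show ?thesis
        unfolding \<sigma>_def using someI_ex[OF exists_unclaimed_edge[of h]] by auto
    qed
  qed
  moreover have "follows_pairing Ps \<sigma>"
    unfolding follows_pairing_def
  proof (intro allI impI ballI)
    fix h P f assume "P \<in> Ps" "last h \<in> P \<and> f \<in> P \<and> f \<noteq> last h \<and> f \<notin> set h"
    then have "answer h f" unfolding answer_def by blast
    then show "\<sigma> h = f"
      using answer_\<sigma> is_pairing_partner_unique[OF pairing] unfolding answer_def by metis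
  qed
  ultimately show ?thesis by blast
qed

lemma legal_history_play_prefix:
  assumes legal: "legal_breaker_strategy \<sigma>" and play: "play_consistent \<sigma> m"
  shows "legal_history (map m [0..<n])"
proof (induction n)
  case 0
  then show ?case by (simp add: legal_history_def)
next
  case (Suc n)
  have "is_edge (m n) \<and> m n \<notin> set (map m [0..<n])"
  proof (cases "even n")
    case True
    then obtain k where "n = 2 * k" ..
    then have "is_edge (m n) \<and> m n \<notin> m ` {..<n}"
      using play unfolding play_consistent_def by blast
    then show ?thesis
      by (simp add: atLeast0LessThan)
  next
    case False
    then have "m n = \<sigma> (map m [0..<n])"
      using play unfolding play_consistent_def by (auto elim!: oddE)
    moreover have "legal_history (map m [0..<n]) \<and> odd (length (map m [0..<n]))"
      using Suc.IH False by simp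
    then have "is_edge (\<sigma> (map m [0..<n])) \<and> \<sigma> (map m [0..<n]) \<notin> set (map m [0..<n])"
      using legal unfolding legal_breaker_strategy_def by blast
    ultimately show ?thesis
      by simp
  qed
  then show ?case
    using Suc.IH unfolding legal_history_def by simp
qed

lemma inj_play:
  assumes "legal_breaker_strategy \<sigma>" "play_consistent \<sigma> m"
  shows "inj m"
proof (rule injI)
  fix i j assume "m i = m j"
  have "distinct (map m [0..<Suc (max i j)])"
    using legal_history_play_prefix[OF assms] unfolding legal_history_def by blast
  then have "inj_on m {0..<Suc (max i j)}"
    by (simp only: distinct_map set_upt)
  with \<open>m i = m j\<close> show "i = j"
    by (auto simp: inj_on_def)
qed

lemma follows_pairing_maker_claims_one_per_pair:
  assumes legal: "legal_breaker_strategy \<sigma>" and follows: "follows_pairing Ps \<sigma>"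
    and play: "play_consistent \<sigma> m" and "P \<in> Ps"
  assumes "m i \<in> P" "m k \<in> P" "even i" "even k"
  shows "i = k"
proof -
  have inj: "inj m" using legal play by (rule inj_play)
  have no_later_partner: False if "i < k" "m i \<in> P" "m k \<in> P" "even i" "even k" for i k
  proof -
    define h where "h = map m [0..<Suc i]"
    have "legal_history h"
      unfolding h_def by (rule legal_history_play_prefix[OF legal play])
    then have "legal_history h \<and> odd (length h)"
      using \<open>even i\<close> by (simp add: h_def)
    then have "\<forall>P\<in>Ps. \<forall>f. last h \<in> P \<and> f \<in> P \<and> f \<noteq> last h \<and> f \<notin> set h \<longrightarrow> \<sigma> h = f"
      using follows unfolding follows_pairing_def by blast
    moreover have "last h = m i" "m k \<notin> set h" "m k \<noteq> m i"
      unfolding h_def using \<open>i < k\<close> by (simp_all add: inj_image_mem_iff[OF inj] inj_eq[OF inj])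
    ultimately have "\<sigma> h = m k"
      using \<open>P \<in> Ps\<close> that(2,3) by auto
    moreover have "m (Suc i) = \<sigma> h"
      using play \<open>even i\<close> unfolding play_consistent_def h_def by (auto elim!: evenE)
    ultimately have "Suc i = k"
      using inj by (simp add: inj_eq)
    with \<open>even i\<close> \<open>even k\<close> show False by auto
  qed
  show ?thesis
  proof (rule linorder_cases)
    show "i < k \<Longrightarrow> i = k" "k < i \<Longrightarrow> i = k"
      using no_later_partner assms(5-) by blast+
  qed
qed

lemma ereal_rat_dense:
  assumes "a < b"
  obtains c :: rat where "a < ereal (of_rat c)" "ereal (of_rat c) < b"
proof -
  obtain x y where "a < ereal x" "ereal x < ereal y" "ereal y < b"
    using assms by (meson ereal_dense2)
  moreover obtain c where "x < of_rat c" "of_rat c < y"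
    using \<open>ereal x < ereal y\<close> by (auto dest: of_rat_dense)
  then have "ereal x < ereal (of_rat c)" "ereal (of_rat c) < ereal y"
    by simp_all
  ultimately show ?thesis
    using that by (meson less_trans)
qed

lemma rat_open_interval_contains_greaterThanLessThan:
  assumes "rat_open_interval J"
  obtains c d where "c < d" "{c<..<d} \<subseteq> J"
proof -
  obtain a b where J: "J = {x. a < ereal (of_rat x) \<and> ereal (of_rat x) < b}" and "J \<noteq> {}"
    using assms unfolding rat_open_interval_def by blast
  then obtain x where "a < ereal (of_rat x)" "ereal (of_rat x) < b"
    by blast
  obtain c where "a < ereal (of_rat c)" "ereal (of_rat c) < ereal (of_rat x)"
    using \<open>a < ereal (of_rat x)\<close> by (rule ereal_rat_dense)
  obtain d where "ereal (of_rat x) < ereal (of_rat d)" "ereal (of_rat d) < b"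
    using \<open>ereal (of_rat x) < b\<close> by (rule ereal_rat_dense)
  have "{c<..<d} \<subseteq> J"
  proof
    fix y assume "y \<in> {c<..<d}"
    then have "ereal (of_rat c) < ereal (of_rat y)" "ereal (of_rat y) < ereal (of_rat d)"
      by (simp_all add: of_rat_less)
    then show "y \<in> J"
      unfolding J mem_Collect_eq using \<open>a < ereal (of_rat c)\<close> \<open>ereal (of_rat d) < b\<close>
      by (meson less_trans)
  qed
  moreover have "c < d"
    using \<open>ereal (of_rat c) < ereal (of_rat x)\<close> \<open>ereal (of_rat x) < ereal (of_rat d)\<close>
    by (simp add: of_rat_less)
  ultimately show ?thesis
    using that by blast
qed

lemma dense_in_rat_Int_greaterThanLessThan_infinite:
  assumes dense: "dense_in_rat V" and "c < d"
  shows "infinite (V \<inter> {c<..<d})"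
proof
  assume finite: "finite (V \<inter> {c<..<d})"
  obtain v where "v \<in> V" "c < v" "v < d"
    using dense \<open>c < d\<close> unfolding dense_in_rat_def by blast
  then have "V \<inter> {c<..<d} \<noteq> {}"
    by auto
  then have min: "Min (V \<inter> {c<..<d}) \<in> V \<inter> {c<..<d}"
    by (rule Min_in[OF finite])
  then have "c < Min (V \<inter> {c<..<d})"
    by simp
  then obtain w where "w \<in> V" "c < w" "w < Min (V \<inter> {c<..<d})"
    using dense unfolding dense_in_rat_def by blast
  moreover from this have "w \<in> V \<inter> {c<..<d}"
    using min by auto
  then have "Min (V \<inter> {c<..<d}) \<le> w"
    by (rule Min_le[OF finite])
  ultimately show False by simp
qed

lemma dense_in_rat_Int_rat_open_interval_infinite:
  assumes "dense_in_rat V" "rat_open_interval J"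
  shows "infinite (V \<inter> J)"
proof -
  obtain c d where "c < d" "{c<..<d} \<subseteq> J"
    using assms(2) by (rule rat_open_interval_contains_greaterThanLessThan)
  then have "V \<inter> {c<..<d} \<subseteq> V \<inter> J"
    by blast
  then show ?thesis
    using dense_in_rat_Int_greaterThanLessThan_infinite[OF assms(1) \<open>c < d\<close>] by (rule infinite_super)
qed

lemma dense_in_rat_spans_dense_Q_pair:
  assumes intervals: "\<And>j. rat_open_interval (I j)"
    and "surj Q" and pe: "{A. card A = 2} \<subseteq> range pe"
    and dense: "dense_in_rat V"
  obtains p q s where "p \<in> V" "q \<in> V" "s \<in> V" "p \<noteq> q" "s \<notin> {p, q}"
    "{{p, s}, {q, s}} \<in> dense_Q_pairs I Q pe"
proof -
  obtain p where "p \<in> V" "0 < p"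
    using dense zero_less_one unfolding dense_in_rat_def by blast
  moreover obtain q where "q \<in> V" "q < p"
    using dense \<open>0 < p\<close> unfolding dense_in_rat_def by blast
  ultimately have "p \<in> V" "q \<in> V" "p \<noteq> q"
    by auto
  then have "card {p, q} = 2"
    by simp
  then obtain j where j: "pe j = {p, q}"
    using pe by blast
  define N where "N = max (inv Q p) (inv Q q)"
  have "infinite (V \<inter> I j - ({p, q} \<union> Q ` {..N}))"
    using dense_in_rat_Int_rat_open_interval_infinite[OF dense intervals] by simp
  then obtain s where "s \<in> V \<inter> I j - ({p, q} \<union> Q ` {..N})"
    using infinite_imp_nonempty by blast
  then have s: "s \<in> V" "s \<in> I j" "s \<notin> {p, q}" "s \<notin> Q ` {..N}"
    by auto
  have "Q (inv Q s) = s"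
    using \<open>surj Q\<close> by (simp add: surj_f_inv_f)
  with s(4) have "inv Q s \<notin> {..N}"
    by (metis image_eqI)
  then have "inv Q p < inv Q s" "inv Q q < inv Q s"
    unfolding N_def by auto
  then have "{{p, s}, {q, s}} \<in> dense_Q_pairs I Q pe"
    unfolding dense_Q_pairs_def using j s(2,3) \<open>p \<noteq> q\<close> by blast
  with that \<open>p \<in> V\<close> \<open>q \<in> V\<close> \<open>p \<noteq> q\<close> s show ?thesis
    by blast
qed

lemma dense_Q_pairing_strategy_wins:
  assumes intervals: "\<And>j. rat_open_interval (I j)"
    and "surj Q" and "{A. card A = 2} \<subseteq> range pe"
    and legal: "legal_breaker_strategy \<sigma>" and follows: "follows_pairing (dense_Q_pairs I Q pe) \<sigma>"
  shows "breaker_winning \<sigma>"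
  unfolding breaker_winning_def
proof (intro conjI allI impI notI legal)
  fix m assume play: "play_consistent \<sigma> m" and "maker_wins_dense m"
  then obtain V where "dense_in_rat V"
      and clique: "\<And>u v. u \<in> V \<Longrightarrow> v \<in> V \<Longrightarrow> u \<noteq> v \<Longrightarrow> {u, v} \<in> m ` {n. even n}"
    unfolding maker_wins_dense_def by blast
  obtain p q s where "p \<in> V" "q \<in> V" "s \<in> V" "p \<noteq> q" "s \<notin> {p, q}"
      and pair: "{{p, s}, {q, s}} \<in> dense_Q_pairs I Q pe"
    using \<open>dense_in_rat V\<close> by (rule dense_in_rat_spans_dense_Q_pair[OF intervals assms(2,3)])
  have "{p, s} \<in> m ` {n. even n}" "{q, s} \<in> m ` {n. even n}"
    using clique \<open>p \<in> V\<close> \<open>q \<in> V\<close> \<open>s \<in> V\<close> \<open>s \<notin> {p, q}\<close> by auto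
  then obtain i k where "{p, s} = m i" "{q, s} = m k" "even i" "even k"
    by blast
  then have "i = k"
    using follows_pairing_maker_claims_one_per_pair[OF legal follows play pair] by simp
  with \<open>{p, s} = m i\<close> \<open>{q, s} = m k\<close> \<open>p \<noteq> q\<close> \<open>s \<notin> {p, q}\<close> show False
    by (auto simp: doubleton_eq_iff)
qed

theorem lemma4p1:
  fixes I :: "nat \<Rightarrow> rat set" and Q :: "nat \<Rightarrow> rat" and pe :: "nat \<Rightarrow> rat set"
  assumes "\<And>j. rat_open_interval (I j)"
    and "\<And>i j. i \<noteq> j \<Longrightarrow> I i \<inter> I j = {}"
    and "bij Q"
    and "bij_betw pe UNIV {A :: rat set. card A = 2}"
  shows "is_pairing (dense_Q_pairs I Q pe)
    \<and> (\<exists>\<sigma>. legal_breaker_strategy \<sigma> \<and> follows_pairing (dense_Q_pairs I Q pe) \<sigma>)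
    \<and> (\<forall>\<sigma>. legal_breaker_strategy \<sigma> \<and> follows_pairing (dense_Q_pairs I Q pe) \<sigma>
           \<longrightarrow> breaker_winning \<sigma>)"
proof -
  have pairing: "is_pairing (dense_Q_pairs I Q pe)"
    using assms(2) by (rule dense_Q_pairs_is_pairing)
  have "surj Q"
    using assms(3) by (rule bij_is_surj)
  have pe_onto: "{A. card A = 2} \<subseteq> range pe"
    using assms(4) by (simp add: bij_betw_def)
  have "breaker_winning \<sigma>"
    if "legal_breaker_strategy \<sigma>" "follows_pairing (dense_Q_pairs I Q pe) \<sigma>" for \<sigma>
    by (rule dense_Q_pairing_strategy_wins[OF assms(1) \<open>surj Q\<close> pe_onto that])
  then show ?thesis
    using pairing pairing_strategy_exists[OF pairing] by blast
qed

end
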